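(* Let $f\in C^3([0,1])$ be such that $f,f',f'',f'''\geq 0$ on $[0,1]$. Then for every integer $N\geq 1$, $$0\leq \sum_{i=0}^{N}f\left(\frac{i}{N}\right)-N\int_0^1 f(t)\,dt-\frac{f(0)+f(1)}{2}\leq \frac{f'(1)-f'(0)}{4N}.$$ *)

theory Defs
  imports "HOL-Analysis.Analysis"
begin

end

theory Submission
  imports Defs
begin

text \<open>
  On a cell \<open>[m - r, m + r]\<close> with antiderivative \<open>G\<close>, both
  \<open>Q s = s (f (m - s) + f (m + s)) - (G (m + s) - G (m - s))\<close> and
  \<open>P s = s\<^sup>2 / 2 (f' (m + s) - f' (m - s)) - Q s\<close> vanish at \<open>s = 0\<close> and are
  nondecreasing, because \<open>Q' s = s (f' (m + s) - f' (m - s))\<close> and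
  \<open>P' s = s\<^sup>2 / 2 (f'' (m + s) + f'' (m - s))\<close>.
  Hence the trapezoid error \<open>Q r\<close> of the cell lies between \<open>0\<close> and
  \<open>r\<^sup>2 / 2 (f' (m + r) - f' (m - r))\<close>; summed over the \<open>N\<close> cells of the
  uniform grid the upper bounds telescope.
\<close>

definition trapezoid_error :: "(real \<Rightarrow> real) \<Rightarrow> real \<Rightarrow> real \<Rightarrow> real" where
  "trapezoid_error f a b = (b - a) / 2 * (f a + f b) - integral {a..b} f"

lemma DERIV_translate:
  fixes g :: "real \<Rightarrow> real"
  assumes "(g has_real_derivative D) (at (m + s))"
  shows "((\<lambda>s. g (m + s)) has_real_derivative D) (at s)"
proof -
  have "((\<lambda>s. m + s) has_real_derivative 1) (at s)" by (auto intro!: derivative_eq_intros)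
  from DERIV_chain2[where g="\<lambda>s. m + s", OF assms this] show ?thesis by simp
qed

lemma DERIV_reflect:
  fixes g :: "real \<Rightarrow> real"
  assumes "(g has_real_derivative D) (at (m - s))"
  shows "((\<lambda>s. g (m - s)) has_real_derivative - D) (at s)"
proof -
  have "((\<lambda>s. m - s) has_real_derivative -1) (at s)" by (auto intro!: derivative_eq_intros)
  from DERIV_chain2[where g="\<lambda>s. m - s", OF assms this] show ?thesis by simp
qed

lemma continuous_on_translate_reflect:
  fixes g :: "real \<Rightarrow> real"
  assumes "continuous_on {m - r..m + r} g"
  shows "continuous_on {0..r} (\<lambda>s. g (m + s))" and "continuous_on {0..r} (\<lambda>s. g (m - s))"
  by (auto intro!: continuous_on_compose2[OF assms] continuous_intros)

lemma midpoint_trapezoid_lower: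
  fixes f f1 G :: "real \<Rightarrow> real"
  assumes "0 \<le> r"
    and cont_f: "continuous_on {m - r..m + r} f" and cont_G: "continuous_on {m - r..m + r} G"
    and f1: "\<And>x. m - r < x \<Longrightarrow> x < m + r \<Longrightarrow> (f has_real_derivative f1 x) (at x)"
    and G: "\<And>x. m - r < x \<Longrightarrow> x < m + r \<Longrightarrow> (G has_real_derivative f x) (at x)"
    and f1_mono: "\<And>x y. m - r < x \<Longrightarrow> x \<le> y \<Longrightarrow> y < m + r \<Longrightarrow> f1 x \<le> f1 y"
  shows "G (m + r) - G (m - r) \<le> r * (f (m - r) + f (m + r))"
proof -
  define Q where "Q s = s * (f (m - s) + f (m + s)) - (G (m + s) - G (m - s))" for s
  have "Q 0 \<le> Q r"
  proof (rule DERIV_nonneg_imp_increasing_open[OF \<open>0 \<le> r\<close>])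
    fix s assume s: "0 < s" "s < r"
    have "(Q has_real_derivative s * (f1 (m + s) - f1 (m - s))) (at s)"
    proof -
      have inside: "m - r < m - s" "m - s < m + r" "m - r < m + s" "m + s < m + r" using s by auto
      show ?thesis unfolding Q_def
        using DERIV_translate[OF f1[OF inside(3,4)]] DERIV_reflect[OF f1[OF inside(1,2)]]
          DERIV_translate[OF G[OF inside(3,4)]] DERIV_reflect[OF G[OF inside(1,2)]]
        by (auto intro!: derivative_eq_intros simp: algebra_simps)
    qed
    moreover have "f1 (m - s) \<le> f1 (m + s)" using f1_mono s by auto
    ultimately show "\<exists>y. (Q has_real_derivative y) (at s) \<and> 0 \<le> y" using s by auto
  next
    show "continuous_on {0..r} Q"
      unfolding Q_def using cont_f cont_G by (intro continuous_intros continuous_on_translate_reflect)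
  qed
  then show ?thesis by (simp add: Q_def)
qed

lemma midpoint_trapezoid_upper:
  fixes f f1 f2 G :: "real \<Rightarrow> real"
  assumes "0 \<le> r"
    and cont_f: "continuous_on {m - r..m + r} f" and cont_f1: "continuous_on {m - r..m + r} f1"
    and cont_G: "continuous_on {m - r..m + r} G"
    and f1: "\<And>x. m - r < x \<Longrightarrow> x < m + r \<Longrightarrow> (f has_real_derivative f1 x) (at x)"
    and f2: "\<And>x. m - r < x \<Longrightarrow> x < m + r \<Longrightarrow> (f1 has_real_derivative f2 x) (at x)"
    and G: "\<And>x. m - r < x \<Longrightarrow> x < m + r \<Longrightarrow> (G has_real_derivative f x) (at x)"
    and convex: "\<And>x. m - r < x \<Longrightarrow> x < m + r \<Longrightarrow> 0 \<le> f2 x"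
  shows "r * (f (m - r) + f (m + r)) - (G (m + r) - G (m - r)) \<le> r^2 / 2 * (f1 (m + r) - f1 (m - r))"
proof -
  define P where "P s = s^2 / 2 * (f1 (m + s) - f1 (m - s))
    - (s * (f (m - s) + f (m + s)) - (G (m + s) - G (m - s)))" for s
  have "P 0 \<le> P r"
  proof (rule DERIV_nonneg_imp_increasing_open[OF \<open>0 \<le> r\<close>])
    fix s assume s: "0 < s" "s < r"
    have "(P has_real_derivative s^2 / 2 * (f2 (m + s) + f2 (m - s))) (at s)"
    proof -
      have inside: "m - r < m - s" "m - s < m + r" "m - r < m + s" "m + s < m + r" using s by auto
      show ?thesis unfolding P_def
        using DERIV_translate[OF f1[OF inside(3,4)]] DERIV_reflect[OF f1[OF inside(1,2)]]
          DERIV_translate[OF f2[OF inside(3,4)]] DERIV_reflect[OF f2[OF inside(1,2)]]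
          DERIV_translate[OF G[OF inside(3,4)]] DERIV_reflect[OF G[OF inside(1,2)]]
        by (auto intro!: derivative_eq_intros simp: field_simps power2_eq_square)
    qed
    moreover have "0 \<le> f2 (m + s) + f2 (m - s)" using convex s by (simp add: add_nonneg_nonneg)
    ultimately show "\<exists>y. (P has_real_derivative y) (at s) \<and> 0 \<le> y" using s by auto
  next
    show "continuous_on {0..r} P"
      unfolding P_def using cont_f cont_f1 cont_G
      by (intro continuous_intros continuous_on_translate_reflect) auto
  qed
  then show ?thesis by (simp add: P_def)
qed

lemma trapezoid_error_bounds:
  fixes f f1 f2 :: "real \<Rightarrow> real"
  assumes "a \<le> b"
    and cont_f: "continuous_on {a..b} f" and cont_f1: "continuous_on {a..b} f1"
    and f1: "\<And>x. a < x \<Longrightarrow> x < b \<Longrightarrow> (f has_real_derivative f1 x) (at x)"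
    and f2: "\<And>x. a < x \<Longrightarrow> x < b \<Longrightarrow> (f1 has_real_derivative f2 x) (at x)"
    and convex: "\<And>x. a < x \<Longrightarrow> x < b \<Longrightarrow> 0 \<le> f2 x"
  shows "0 \<le> trapezoid_error f a b"
    and "trapezoid_error f a b \<le> (b - a)^2 / 8 * (f1 b - f1 a)"
proof -
  define G where "G x = integral {a..x} f" for x
  have G_within: "(G has_real_derivative f x) (at x within {a..b})" if "x \<in> {a..b}" for x
    unfolding G_def[abs_def] by (rule integral_has_real_derivative[OF cont_f that])
  have cont_G: "continuous_on {a..b} G" by (rule DERIV_continuous_on[OF G_within])
  have G: "(G has_real_derivative f x) (at x)" if "a < x" "x < b" for x
    using G_within[of x] that by (simp add: at_within_Icc_at)
  have f1_mono: "f1 x \<le> f1 y" if "a < x" "x \<le> y" "y < b" for x y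
  proof (rule DERIV_nonneg_imp_increasing_open[OF \<open>x \<le> y\<close>])
    show "continuous_on {x..y} f1" using that by (auto intro: continuous_on_subset[OF cont_f1])
    show "\<exists>z. (f1 has_real_derivative z) (at t) \<and> 0 \<le> z" if "x < t" "t < y" for t
      using f2[of t] convex[of t] that \<open>a < x\<close> \<open>y < b\<close> by auto
  qed
  define m where "m = (a + b) / 2"
  define r where "r = (b - a) / 2"
  have "0 \<le> r" using \<open>a \<le> b\<close> by (simp add: r_def)
  have ab: "a = m - r" "b = m + r" by (simp_all add: m_def r_def field_simps)
  have error_eq: "trapezoid_error f (m - r) (m + r) = r * (f (m - r) + f (m + r)) - (G (m + r) - G (m - r))"
    unfolding trapezoid_error_def G_def ab by simp
  show "0 \<le> trapezoid_error f a b"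
    using midpoint_trapezoid_lower[OF \<open>0 \<le> r\<close>, of m f G f1] cont_f cont_G f1 G f1_mono error_eq
    unfolding ab by simp
  have "trapezoid_error f a b \<le> r^2 / 2 * (f1 b - f1 a)"
    using midpoint_trapezoid_upper[OF \<open>0 \<le> r\<close>, of m f f1 G f2] cont_f cont_f1 cont_G f1 f2 G convex
      error_eq
    unfolding ab by simp
  then show "trapezoid_error f a b \<le> (b - a)^2 / 8 * (f1 b - f1 a)"
    by (simp add: r_def power_divide)
qed

lemma integral_sum_partition:
  fixes p :: "nat \<Rightarrow> real" and f :: "real \<Rightarrow> 'a::banach"
  assumes "mono p" and "continuous_on {p 0..p n} f"
  shows "integral {p 0..p n} f = (\<Sum>i<n. integral {p i..p (Suc i)} f)"
  using assms(2)
proof (induction n)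
  case (Suc n)
  have "p 0 \<le> p n" "p n \<le> p (Suc n)" using \<open>mono p\<close> by (simp_all add: monoD)
  then have "continuous_on {p 0..p n} f"
    using Suc.prems by (auto intro: continuous_on_subset)
  with Suc.IH have "integral {p 0..p n} f = (\<Sum>i<n. integral {p i..p (Suc i)} f)" .
  moreover have "integral {p 0..p n} f + integral {p n..p (Suc n)} f = integral {p 0..p (Suc n)} f"
    using \<open>p 0 \<le> p n\<close> \<open>p n \<le> p (Suc n)\<close> Suc.prems
    by (intro Henstock_Kurzweil_Integration.integral_combine integrable_continuous_real)
  ultimately show ?case by simp
qed simp

lemma sum_atLeast0AtMost_minus_half_ends:
  fixes g :: "nat \<Rightarrow> 'a::field_char_0"
  shows "(\<Sum>i=0..n. g i) - (g 0 + g n) / 2 = (\<Sum>i<n. (g i + g (Suc i)) / 2)"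
  by (induction n) (auto simp: field_simps)

lemma uniform_grid_trapezoid_sum_eq:
  fixes f :: "real \<Rightarrow> real" and N :: nat
  assumes "0 < N" and cont_f: "continuous_on {0..1} f"
  shows "(\<Sum>i=0..N. f (real i / real N)) - real N * integral {0..1} f - (f 0 + f 1) / 2
    = real N * (\<Sum>i<N. trapezoid_error f (real i / real N) (real (Suc i) / real N))"
proof -
  define x where "x i = real i / real N" for i
  have x_ends: "x 0 = 0" "x N = 1" using \<open>0 < N\<close> by (simp_all add: x_def)
  have "mono x" by (auto intro!: monoI divide_right_mono simp: x_def)
  have "integral {0..1} f = (\<Sum>i<N. integral {x i..x (Suc i)} f)"
    using integral_sum_partition[OF \<open>mono x\<close>, of N f] cont_f by (simp add: x_ends)
  moreover have "(\<Sum>i=0..N. f (x i)) - (f 0 + f 1) / 2 = (\<Sum>i<N. (f (x i) + f (x (Suc i))) / 2)"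
    using sum_atLeast0AtMost_minus_half_ends[of "\<lambda>i. f (x i)" N] x_ends by simp
  moreover have "real N * trapezoid_error f (x i) (x (Suc i))
      = (f (x i) + f (x (Suc i))) / 2 - real N * integral {x i..x (Suc i)} f" for i
    using \<open>0 < N\<close> by (simp add: trapezoid_error_def x_def field_simps)
  ultimately show ?thesis
    unfolding x_def[symmetric] by (simp add: sum_distrib_left sum_subtractf)
qed

lemma uniform_grid_trapezoid_error_bounds:
  fixes f f1 f2 :: "real \<Rightarrow> real" and N :: nat
  assumes "0 < N"
    and cont_f: "continuous_on {0..1} f" and cont_f1: "continuous_on {0..1} f1"
    and f1: "\<And>x. 0 < x \<Longrightarrow> x < 1 \<Longrightarrow> (f has_real_derivative f1 x) (at x)"
    and f2: "\<And>x. 0 < x \<Longrightarrow> x < 1 \<Longrightarrow> (f1 has_real_derivative f2 x) (at x)"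
    and convex: "\<And>x. 0 < x \<Longrightarrow> x < 1 \<Longrightarrow> 0 \<le> f2 x"
  defines "S \<equiv> \<Sum>i<N. trapezoid_error f (real i / real N) (real (Suc i) / real N)"
  shows "0 \<le> S" and "S \<le> (f1 1 - f1 0) / (8 * real N^2)"
proof -
  define x where "x i = real i / real N" for i
  have x_ends: "x 0 = 0" "x N = 1" and x_step: "x (Suc i) - x i = 1 / real N" for i
    using \<open>0 < N\<close> by (simp_all add: x_def field_simps)
  have "mono x" by (auto intro!: monoI divide_right_mono simp: x_def)
  have cell_bounds: "trapezoid_error f (x i) (x (Suc i))
      \<in> {0 .. (1 / real N)^2 / 8 * (f1 (x (Suc i)) - f1 (x i))}" if "i < N" for i
  proof -
    have cell: "{x i..x (Suc i)} \<subseteq> {0..1}"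
      using that monoD[OF \<open>mono x\<close>, of 0 i] monoD[OF \<open>mono x\<close>, of "Suc i" N] x_ends by auto
    then show ?thesis
      using trapezoid_error_bounds[of "x i" "x (Suc i)" f f1 f2] monoD[OF \<open>mono x\<close>, of i "Suc i"]
        continuous_on_subset[OF cont_f cell] continuous_on_subset[OF cont_f1 cell] f1 f2 convex
      unfolding x_step by fastforce
  qed
  have S_def': "S = (\<Sum>i<N. trapezoid_error f (x i) (x (Suc i)))" by (simp add: S_def x_def)
  show "0 \<le> S" unfolding S_def' using cell_bounds by (intro sum_nonneg) auto
  have "S \<le> (\<Sum>i<N. (1 / real N)^2 / 8 * (f1 (x (Suc i)) - f1 (x i)))"
    unfolding S_def' using cell_bounds by (intro sum_mono) auto
  also have "\<dots> = (f1 1 - f1 0) / (8 * real N^2)"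
    unfolding sum_distrib_left[symmetric] sum_lessThan_telescope[of "\<lambda>i. f1 (x i)"]
    by (simp add: x_ends power_divide)
  finally show "S \<le> (f1 1 - f1 0) / (8 * real N^2)" .
qed

theorem lemma2p2:
  fixes f f1 f2 f3 :: "real \<Rightarrow> real" and N :: nat
  assumes d1: "\<And>x. x \<in> {0..1} \<Longrightarrow> (f has_real_derivative f1 x) (at x within {0..1})"
      and d2: "\<And>x. x \<in> {0..1} \<Longrightarrow> (f1 has_real_derivative f2 x) (at x within {0..1})"
      and d3: "\<And>x. x \<in> {0..1} \<Longrightarrow> (f2 has_real_derivative f3 x) (at x within {0..1})"
      and c3: "continuous_on {0..1} f3"
      and nn: "\<And>x. x \<in> {0..1} \<Longrightarrow> f x \<ge> 0 \<and> f1 x \<ge> 0 \<and> f2 x \<ge> 0 \<and> f3 x \<ge> 0"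
      and N: "N \<ge> 1"
  shows "0 \<le> (\<Sum>i=0..N. f (real i / real N)) - real N * integral {0..1} f - (f 0 + f 1) / 2
     \<and> (\<Sum>i=0..N. f (real i / real N)) - real N * integral {0..1} f - (f 0 + f 1) / 2
         \<le> (f1 1 - f1 0) / (4 * real N)"
proof -
  define S where "S = (\<Sum>i<N. trapezoid_error f (real i / real N) (real (Suc i) / real N))"
  have "0 < N" using N by simp
  have cont_f: "continuous_on {0..1} f" and cont_f1: "continuous_on {0..1} f1"
    using DERIV_continuous_on d1 d2 by blast+
  have interior: "(f has_real_derivative f1 x) (at x)" "(f1 has_real_derivative f2 x) (at x)" "0 \<le> f2 x"
    if "0 < x" "x < 1" for x
    using that d1[of x] d2[of x] nn[of x] by (simp_all add: at_within_Icc_at)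
  have "0 \<le> S" and S_le: "S \<le> (f1 1 - f1 0) / (8 * real N^2)"
    unfolding S_def using uniform_grid_trapezoid_error_bounds[OF \<open>0 < N\<close> cont_f cont_f1] interior
    by blast+
  then have "0 \<le> (f1 1 - f1 0) / (8 * real N^2)" by linarith
  with \<open>0 < N\<close> have "0 \<le> f1 1 - f1 0" by (simp add: zero_le_divide_iff)
  have "real N * S \<le> real N * ((f1 1 - f1 0) / (8 * real N^2))"
    using S_le by (intro mult_left_mono) auto
  also have "\<dots> \<le> (f1 1 - f1 0) / (4 * real N)"
    using \<open>0 \<le> f1 1 - f1 0\<close> \<open>0 < N\<close> by (simp add: power2_eq_square frac_le)
  finally show ?thesis
    using \<open>0 \<le> S\<close> uniform_grid_trapezoid_sum_eq[OF \<open>0 < N\<close> cont_f] by (simp add: S_def)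
qed

end
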